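(* Let $(\mathcal M,g)$ be an oriented three-dimensional Riemannian or Lorentzian manifold satisfying the topological massive gravity equations $\Phi_{ab}=\frac1m( *A)_{ab}$, $R=6\Lambda$ ($m\neq0$, $\Lambda$ constants), and let $\mathcal N$ be a null structure with generator $k^a$. (1) If $k_{[a}\Phi_{b]c}k^c=0$, then $k^ak^b\left(A_{abc}+3g_{bc}\nabla_aS\right)=0$. (2) If $\Phi_{ab}k^b=0$, then $k^a\left(A_{abc}-2g_{a[b}\nabla_{c]}S\right)=0$, $k^ak^bA_{abc}=0$, $k^a\nabla_aS=0$. (3) If $k_{[a}\Phi_{b]c}=0$, then $k^c\left(A_{abc}-g_{ca}\nabla_bS\right)=0$, $k^aA_{abc}=0$, $k_{[a}\nabla_{b]}S=0$.
   Context: Abstract index notation; $\nabla$ the Levi-Civita connection; brackets denote (skew-)symmetrisation with weight $1/2$. $R_{abd}{}^cV^d=2\nabla_{[a}\nabla_{b]}V^c$, $R_{ab}=R_{acb}{}^c$, $R=R_a{}^a$, $\Phi_{ab}=R_{ab}-\frac13Rg_{ab}$, $S=\frac1{12}R$, Cotton tensor $A_{abc}=-2\nabla_{[b}\Phi_{c]a}+2g_{a[b}\nabla_{c]}S$. The orientation is a volume form $e_{abc}$ normalised by $e_{abc}e^{abc}=(-1)^q6$, $q$ the number of negative eigenvalues of $g$; $( *A)_{ab}=\frac12e_b{}^{cd}A_{acd}$ (a symmetric tracefree tensor). $g,\nabla$ extended complex-(bi)linearly to $T^{\mathbb C}\mathcal M$. A null structure is a complex line subbundle $\mathcal N\subset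 T^{\mathbb C}\mathcal M$ with $g(k,k)=0$ for all sections; a generator is a nowhere-vanishing section. *)

theory Defs
  imports "HOL-Analysis.Analysis" "HOL-Library.Numeral_Type" "HOL-Computational_Algebra.Polynomial"
begin

text \<open>Local coordinate model: the manifold is modelled by an open coordinate domain
U of real^3, tensors are given by their components (indices of type 3).\<close>

definition pd :: "(real^3 \<Rightarrow> 'b::real_normed_vector) \<Rightarrow> 3 \<Rightarrow> real^3 \<Rightarrow> 'b" where
  "pd f i x = frechet_derivative f (at x) (axis i 1)"

fun ipd :: "3 list \<Rightarrow> (real^3 \<Rightarrow> 'b::real_normed_vector) \<Rightarrow> real^3 \<Rightarrow> 'b" where
  "ipd [] f = f"
| "ipd (i # is) f = pd (ipd is f) i"

definition smooth_on :: "(real^3) set \<Rightarrow> (real^3 \<Rightarrow> 'b::real_normed_vector) \<Rightarrow> bool" where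
  "smooth_on U f \<longleftrightarrow> (\<forall>is. \<forall>x\<in>U. ipd is f differentiable (at x))"

type_synonym metric = "real^3 \<Rightarrow> real^3^3"

definition ginv :: "metric \<Rightarrow> real^3 \<Rightarrow> 3 \<Rightarrow> 3 \<Rightarrow> real" where
  "ginv g x a b = matrix_inv (g x) $ a $ b"

definition christ :: "metric \<Rightarrow> 3 \<Rightarrow> 3 \<Rightarrow> 3 \<Rightarrow> real^3 \<Rightarrow> real" where
  "christ g c a b x = (1/2) * (\<Sum>d\<in>UNIV. ginv g x c d *
      (pd (\<lambda>y. g y $ b $ d) a x + pd (\<lambda>y. g y $ a $ d) b x - pd (\<lambda>y. g y $ a $ b) d x))"

text \<open>Riemann tensor R_{abd}^c with R_{abd}^c V^d = 2 nabla_[a nabla_b] V^c.\<close>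
definition riem :: "metric \<Rightarrow> 3 \<Rightarrow> 3 \<Rightarrow> 3 \<Rightarrow> 3 \<Rightarrow> real^3 \<Rightarrow> real" where
  "riem g a b d c x = pd (christ g c b d) a x - pd (christ g c a d) b x
     + (\<Sum>e\<in>UNIV. christ g c a e x * christ g e b d x - christ g c b e x * christ g e a d x)"

definition ric :: "metric \<Rightarrow> 3 \<Rightarrow> 3 \<Rightarrow> real^3 \<Rightarrow> real" where
  "ric g a b x = (\<Sum>c\<in>UNIV. riem g a c b c x)"

definition scal :: "metric \<Rightarrow> real^3 \<Rightarrow> real" where
  "scal g x = (\<Sum>a\<in>UNIV. \<Sum>b\<in>UNIV. ginv g x a b * ric g a b x)"

definition phi :: "metric \<Rightarrow> 3 \<Rightarrow> 3 \<Rightarrow> real^3 \<Rightarrow> real" where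
  "phi g a b x = ric g a b x - (1/3) * scal g x * g x $ a $ b"

definition schS :: "metric \<Rightarrow> real^3 \<Rightarrow> real" where
  "schS g x = scal g x / 12"

definition covd2 :: "metric \<Rightarrow> (3 \<Rightarrow> 3 \<Rightarrow> real^3 \<Rightarrow> real) \<Rightarrow> 3 \<Rightarrow> 3 \<Rightarrow> 3 \<Rightarrow> real^3 \<Rightarrow> real" where
  "covd2 g T c a b x = pd (T a b) c x
     - (\<Sum>d\<in>UNIV. christ g d c a x * T d b x) - (\<Sum>d\<in>UNIV. christ g d c b x * T a d x)"

definition cotton :: "metric \<Rightarrow> 3 \<Rightarrow> 3 \<Rightarrow> 3 \<Rightarrow> real^3 \<Rightarrow> real" where
  "cotton g a b c x = - (covd2 g (phi g) b c a x - covd2 g (phi g) c b a x)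
     + (g x $ a $ b * pd (schS g) c x - g x $ a $ c * pd (schS g) b x)"

definition hodge_cotton :: "metric \<Rightarrow> (real^3 \<Rightarrow> 3 \<Rightarrow> 3 \<Rightarrow> 3 \<Rightarrow> real) \<Rightarrow> 3 \<Rightarrow> 3 \<Rightarrow> real^3 \<Rightarrow> real" where
  "hodge_cotton g e a b x = (1/2) * (\<Sum>c\<in>UNIV. \<Sum>d\<in>UNIV.
      (\<Sum>c'\<in>UNIV. \<Sum>d'\<in>UNIV. ginv g x c c' * ginv g x d d' * e x b c' d') * cotton g a c d x)"

definition charpoly3 :: "real^3^3 \<Rightarrow> real poly" where
  "charpoly3 G = det (\<chi> i j. (if i = j then [:0, 1:] else 0) - [: G $ i $ j :])"

definition neg_eigs :: "real^3^3 \<Rightarrow> nat" where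
  "neg_eigs G = (\<Sum>l\<in>{l. l < 0 \<and> poly (charpoly3 G) l = 0}. order l (charpoly3 G))"

text \<open>Smooth Riemannian (q = 0) or Lorentzian (q = 1 or 2) metric on U.\<close>
definition riem_or_lor_metric :: "(real^3) set \<Rightarrow> metric \<Rightarrow> bool" where
  "riem_or_lor_metric U g \<longleftrightarrow> open U \<and>
     (\<forall>a b. smooth_on U (\<lambda>x. g x $ a $ b)) \<and>
     (\<forall>x\<in>U. transpose (g x) = g x \<and> det (g x) \<noteq> 0 \<and> neg_eigs (g x) \<in> {0, 1, 2})"

definition orientation :: "(real^3) set \<Rightarrow> metric \<Rightarrow> (real^3 \<Rightarrow> 3 \<Rightarrow> 3 \<Rightarrow> 3 \<Rightarrow> real) \<Rightarrow> bool" where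
  "orientation U g e \<longleftrightarrow>
     (\<forall>a b c. continuous_on U (\<lambda>x. e x a b c)) \<and>
     (\<forall>x\<in>U. (\<forall>a b c. e x b a c = - e x a b c \<and> e x a c b = - e x a b c) \<and>
        (\<Sum>a\<in>UNIV. \<Sum>b\<in>UNIV. \<Sum>c\<in>UNIV. \<Sum>a'\<in>UNIV. \<Sum>b'\<in>UNIV. \<Sum>c'\<in>UNIV.
            ginv g x a a' * ginv g x b b' * ginv g x c c' * e x a b c * e x a' b' c')
          = (-1) ^ neg_eigs (g x) * 6)"

text \<open>Complex-bilinear extension: g(k,l) and k_a = g_{ab} k^b.\<close>
definition gC :: "metric \<Rightarrow> real^3 \<Rightarrow> 3 \<Rightarrow> 3 \<Rightarrow> complex" where
  "gC g x a b = complex_of_real (g x $ a $ b)"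

definition lower :: "metric \<Rightarrow> (real^3 \<Rightarrow> complex^3) \<Rightarrow> 3 \<Rightarrow> real^3 \<Rightarrow> complex" where
  "lower g k a x = (\<Sum>b\<in>UNIV. gC g x a b * k x $ b)"

definition null_generator :: "(real^3) set \<Rightarrow> metric \<Rightarrow> (real^3 \<Rightarrow> complex^3) \<Rightarrow> bool" where
  "null_generator U g k \<longleftrightarrow> (\<forall>a. smooth_on U (\<lambda>x. k x $ a)) \<and>
     (\<forall>x\<in>U. k x \<noteq> 0 \<and> (\<Sum>a\<in>UNIV. \<Sum>b\<in>UNIV. gC g x a b * k x $ a * k x $ b) = 0)"

end

theory Submission
  imports Defs
begin

(* Since R is constant, so is S, and every term containing the gradient of S vanishes.
   Applying the Hodge star once more to the field equation, which is possible because the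
   volume form is normalised, gives A_abc = (-1)^q m e_bc^d Phi_ad; moreover Phi is symmetric,
   since the Ricci tensor of the Levi-Civita connection is (this uses the symmetry of the second
   derivatives of g). What remains is pointwise linear algebra with the null vector k and its
   lowered form k_a = g_ab k^b, which satisfies k^a k_a = 0 and k_a <> 0.
   (1) says that Phi k is proportional to k_a, so k^a k^b A_abc is a multiple of
   e_bcd k^b k^d = 0. (2): contracting A with k^a produces e applied to Phi k = 0.
   (3) says Phi = mu k_a k_b, whence Phi k = mu k_a (k^b k_b) = 0, and k^c A_abc is a multiple
   of e_bcd k^c k^d = 0. *)

section \<open>Partial derivatives and Schwarz's theorem\<close>

lemma pd_cong:
  assumes "open U" "x \<in> U" "\<And>y. y \<in> U \<Longrightarrow> f y = h y"
  shows "pd f i x = pd h i x"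
proof -
  have "(f has_derivative f') (at x) \<longleftrightarrow> (h has_derivative f') (at x)" for f'
    using assms has_derivative_transform_within_open[of f _ x UNIV U h]
      has_derivative_transform_within_open[of h _ x UNIV U f] by auto
  then show ?thesis
    unfolding pd_def frechet_derivative_def by simp
qed

lemma pd_eq_has_derivative:
  assumes "(f has_derivative f') (at x)"
  shows "pd f i x = f' (axis i 1)"
  using assms frechet_derivative_at unfolding pd_def by metis

lemma pd_const [simp]: "pd (\<lambda>y. c) i x = 0"
  unfolding pd_def by simp

lemma pd_mult:
  fixes f h :: "real^3 \<Rightarrow> real"
  assumes "f differentiable (at x)" "h differentiable (at x)"
  shows "pd (\<lambda>y. f y * h y) i x = f x * pd h i x + pd f i x * h x"
  using pd_eq_has_derivative[OF has_derivative_mult[OF assms[THEN frechet_derivative_works[THEN iffD1]]]]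
  unfolding pd_def by simp

lemma pd_cmult:
  fixes f :: "real^3 \<Rightarrow> real"
  assumes "f differentiable (at x)"
  shows "pd (\<lambda>y. c * f y) i x = c * pd f i x"
  using pd_mult[OF differentiable_const assms] by simp

lemma pd_sum:
  fixes f :: "'j \<Rightarrow> real^3 \<Rightarrow> real"
  assumes "finite S" "\<And>j. j \<in> S \<Longrightarrow> f j differentiable (at x)"
  shows "pd (\<lambda>y. \<Sum>j\<in>S. f j y) i x = (\<Sum>j\<in>S. pd (f j) i x)"
proof -
  have "((\<lambda>y. \<Sum>j\<in>S. f j y) has_derivative (\<lambda>v. \<Sum>j\<in>S. frechet_derivative (f j) (at x) v)) (at x)"
    using assms by (intro has_derivative_sum) (auto simp: frechet_derivative_works)
  from pd_eq_has_derivative[OF this] show ?thesis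
    unfolding pd_def by simp
qed

lemma has_real_derivative_pd_along_axis:
  fixes f :: "real^3 \<Rightarrow> real"
  assumes "f differentiable (at (y + t *\<^sub>R axis i 1))"
  shows "((\<lambda>t. f (y + t *\<^sub>R axis i 1)) has_real_derivative pd f i (y + t *\<^sub>R axis i 1)) (at t)"
proof -
  let ?f' = "frechet_derivative f (at (y + t *\<^sub>R axis i 1))"
  have "((\<lambda>t. y + t *\<^sub>R axis i 1) has_derivative (\<lambda>s. s *\<^sub>R axis i 1)) (at t)"
    by (auto intro!: derivative_eq_intros)
  from diff_chain_at[OF this assms[unfolded frechet_derivative_works]]
  have "((\<lambda>t. f (y + t *\<^sub>R axis i 1)) has_derivative (\<lambda>s. ?f' (axis i 1) * s)) (at t)"
    using linear_frechet_derivative[OF assms] by (simp add: o_def linear_scale mult.commute)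
  then show ?thesis
    unfolding has_field_derivative_def pd_def .
qed

lemma mvt_along_axis:
  fixes f :: "real^3 \<Rightarrow> real"
  assumes "h > 0" and "\<And>t. 0 \<le> t \<Longrightarrow> t \<le> h \<Longrightarrow> f differentiable (at (y + t *\<^sub>R axis i 1))"
  shows "\<exists>z. 0 < z \<and> z < h \<and> f (y + h *\<^sub>R axis i 1) - f y = h * pd f i (y + z *\<^sub>R axis i 1)"
  using MVT2[OF assms(1), of "\<lambda>t. f (y + t *\<^sub>R axis i 1)"] assms(2)
  by (simp add: has_real_derivative_pd_along_axis)

lemma second_difference_eq_pd_difference:
  fixes f :: "real^3 \<Rightarrow> real"
  assumes f: "\<forall>y\<in>U. f differentiable (at y)" and "h > 0"
    and square: "\<And>t s. 0 \<le> t \<Longrightarrow> t \<le> h \<Longrightarrow> 0 \<le> s \<Longrightarrow> s \<le> h \<Longrightarrow>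
      x + t *\<^sub>R axis i 1 + s *\<^sub>R axis j 1 \<in> U"
  shows "\<exists>\<xi>. 0 < \<xi> \<and> \<xi> < h \<and>
    f (x + h *\<^sub>R axis i 1 + h *\<^sub>R axis j 1) - f (x + h *\<^sub>R axis i 1) - f (x + h *\<^sub>R axis j 1) + f x
      = h * (pd f i (x + \<xi> *\<^sub>R axis i 1 + h *\<^sub>R axis j 1) - pd f i (x + \<xi> *\<^sub>R axis i 1))"
proof -
  let ?u = "axis i 1 :: real^3" and ?v = "axis j 1 :: real^3"
  have "((\<lambda>t. f ((x + h *\<^sub>R ?v) + t *\<^sub>R ?u) - f (x + t *\<^sub>R ?u)) has_real_derivative
      pd f i ((x + h *\<^sub>R ?v) + t *\<^sub>R ?u) - pd f i (x + t *\<^sub>R ?u)) (at t)"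
    if "0 \<le> t" "t \<le> h" for t
  proof -
    have "(x + h *\<^sub>R ?v) + t *\<^sub>R ?u \<in> U" "x + t *\<^sub>R ?u \<in> U"
      using square[of t h] square[of t 0] that \<open>h > 0\<close> by (simp_all add: add_ac)
    then show ?thesis
      using f by (intro DERIV_diff has_real_derivative_pd_along_axis) auto
  qed
  from MVT2[OF \<open>h > 0\<close> this] show ?thesis
    by (simp add: algebra_simps)
qed

lemma second_difference_eq_pd_pd:
  fixes f :: "real^3 \<Rightarrow> real"
  assumes f: "\<forall>y\<in>U. f differentiable (at y)" and pd_f: "\<forall>y\<in>U. pd f i differentiable (at y)"
    and "h > 0"
    and square: "\<And>t s. 0 \<le> t \<Longrightarrow> t \<le> h \<Longrightarrow> 0 \<le> s \<Longrightarrow> s \<le> h \<Longrightarrow>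
      x + t *\<^sub>R axis i 1 + s *\<^sub>R axis j 1 \<in> U"
  shows "\<exists>p. norm (p - x) \<le> 2 * h \<and>
     f (x + h *\<^sub>R axis i 1 + h *\<^sub>R axis j 1) - f (x + h *\<^sub>R axis i 1) - f (x + h *\<^sub>R axis j 1) + f x
       = h * h * pd (pd f i) j p"
proof -
  obtain \<xi> where \<xi>: "0 < \<xi>" "\<xi> < h"
    "f (x + h *\<^sub>R axis i 1 + h *\<^sub>R axis j 1) - f (x + h *\<^sub>R axis i 1) - f (x + h *\<^sub>R axis j 1) + f x
      = h * (pd f i (x + \<xi> *\<^sub>R axis i 1 + h *\<^sub>R axis j 1) - pd f i (x + \<xi> *\<^sub>R axis i 1))"
    using second_difference_eq_pd_difference[OF f \<open>h > 0\<close> square] by blast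
  obtain \<eta> where \<eta>: "0 < \<eta>" "\<eta> < h" "pd f i (x + \<xi> *\<^sub>R axis i 1 + h *\<^sub>R axis j 1) - pd f i (x + \<xi> *\<^sub>R axis i 1)
      = h * pd (pd f i) j (x + \<xi> *\<^sub>R axis i 1 + \<eta> *\<^sub>R axis j 1)"
    using mvt_along_axis[OF \<open>h > 0\<close>, of "pd f i" "x + \<xi> *\<^sub>R axis i 1" j] pd_f square[of \<xi>] \<xi>
    by auto
  have "norm (\<xi> *\<^sub>R axis i 1 + \<eta> *\<^sub>R axis j 1 :: real^3) \<le> \<xi> + \<eta>"
    using norm_triangle_ineq[of "\<xi> *\<^sub>R axis i 1 :: real^3" "\<eta> *\<^sub>R axis j 1"] \<xi> \<eta> by simp
  then show ?thesis
    using \<xi> \<eta> by (intro exI[of _ "x + \<xi> *\<^sub>R axis i 1 + \<eta> *\<^sub>R axis j 1"]) (simp add: add.assoc)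
qed

lemma axis_square_in_ball:
  fixes x :: "real^'n"
  assumes "0 \<le> t" "t \<le> h" "0 \<le> s" "s \<le> h" "2 * h < r"
  shows "x + t *\<^sub>R axis i 1 + s *\<^sub>R axis j 1 \<in> ball x r"
proof -
  have "norm (t *\<^sub>R axis i 1 + s *\<^sub>R axis j 1 :: real^'n) \<le> t + s"
    using norm_triangle_ineq[of "t *\<^sub>R axis i 1 :: real^'n" "s *\<^sub>R axis j 1"] assms by simp
  then have "dist (x + (t *\<^sub>R axis i 1 + s *\<^sub>R axis j 1)) x < r"
    using assms by (simp add: dist_norm)
  then show ?thesis
    by (simp add: dist_commute add.assoc)
qed

text \<open>By the mean value theorem applied twice, the second difference of f over a small square
  equals h^2 times either mixed partial at some nearby point; continuity at x then forces the two
  mixed partials to agree.\<close>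
lemma pd_pd_commute:
  fixes f :: "real^3 \<Rightarrow> real"
  assumes "open U" "x \<in> U" and f: "\<forall>y\<in>U. f differentiable (at y)"
    and pd_f: "\<forall>y\<in>U. \<forall>k. pd f k differentiable (at y)"
    and cont: "isCont (pd (pd f i) j) x" "isCont (pd (pd f j) i) x"
  shows "pd (pd f i) j x = pd (pd f j) i x"
proof (rule ccontr)
  let ?A = "pd (pd f i) j x" and ?B = "pd (pd f j) i x"
  assume "?A \<noteq> ?B"
  define \<epsilon> where "\<epsilon> = \<bar>?A - ?B\<bar> / 2"
  have "\<epsilon> > 0" using \<open>?A \<noteq> ?B\<close> unfolding \<epsilon>_def by simp
  obtain r where r: "r > 0" "ball x r \<subseteq> U" using assms(1,2) open_contains_ball by blast
  obtain d1 where d1: "d1 > 0" "\<forall>y. dist y x < d1 \<longrightarrow> dist (pd (pd f i) j y) ?A < \<epsilon>"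
    using cont(1) \<open>\<epsilon> > 0\<close> unfolding continuous_at_eps_delta by blast
  obtain d2 where d2: "d2 > 0" "\<forall>y. dist y x < d2 \<longrightarrow> dist (pd (pd f j) i y) ?B < \<epsilon>"
    using cont(2) \<open>\<epsilon> > 0\<close> unfolding continuous_at_eps_delta by blast
  define h where "h = min (min d1 d2) r / 4"
  have h: "h > 0" "2 * h < d1" "2 * h < d2" "2 * h < r" using d1 d2 r unfolding h_def by auto
  have square: "x + t *\<^sub>R axis a 1 + s *\<^sub>R axis b 1 \<in> U"
    if "0 \<le> t" "t \<le> h" "0 \<le> s" "s \<le> h" for t s a b
    using axis_square_in_ball[OF that h(4)] r(2) by blast
  obtain p where p: "norm (p - x) \<le> 2 * h"
     "f (x + h *\<^sub>R axis i 1 + h *\<^sub>R axis j 1) - f (x + h *\<^sub>R axis i 1) - f (x + h *\<^sub>R axis j 1) + f x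
       = h * h * pd (pd f i) j p"
    using second_difference_eq_pd_pd[of U f i h x j] f pd_f h(1) square by blast
  obtain q where q: "norm (q - x) \<le> 2 * h"
     "f (x + h *\<^sub>R axis j 1 + h *\<^sub>R axis i 1) - f (x + h *\<^sub>R axis j 1) - f (x + h *\<^sub>R axis i 1) + f x
       = h * h * pd (pd f j) i q"
    using second_difference_eq_pd_pd[of U f j h x i] f pd_f h(1) square by blast
  have "f (x + h *\<^sub>R axis i 1 + h *\<^sub>R axis j 1) = f (x + h *\<^sub>R axis j 1 + h *\<^sub>R axis i 1)"
    by (simp add: add_ac)
  then have "h * h * pd (pd f i) j p = h * h * pd (pd f j) i q"
    using p(2) q(2) by linarith
  then have "pd (pd f i) j p = pd (pd f j) i q"
    using h(1) by simp
  moreover have "dist (pd (pd f i) j p) ?A < \<epsilon>" "dist (pd (pd f j) i q) ?B < \<epsilon>"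
    using d1 d2 p q h by (simp_all add: dist_norm)
  ultimately have "\<bar>?A - ?B\<bar> < 2 * \<epsilon>"
    by (simp add: dist_real_def)
  then show False
    unfolding \<epsilon>_def by simp
qed

lemma smooth_pd_pd_commute:
  fixes f :: "real^3 \<Rightarrow> real"
  assumes "open U" "x \<in> U" "smooth_on U f"
  shows "pd (pd f i) j x = pd (pd f j) i x"
proof (rule pd_pd_commute[OF assms(1,2)])
  have "ipd ds f differentiable (at y)" if "y \<in> U" for ds y
    using assms(3) that unfolding smooth_on_def by blast
  from this[where ds = "[]"] this[where ds = "[_]"] this[where ds = "[_, _]"] assms(2)
  show "\<forall>y\<in>U. f differentiable (at y)" "\<forall>y\<in>U. \<forall>k. pd f k differentiable (at y)"
    "isCont (pd (pd f i) j) x" "isCont (pd (pd f j) i) x"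
    by (auto intro: differentiable_imp_continuous_within)
qed

section \<open>Inverse of a 3x3 matrix\<close>

definition cyclic_succ3 :: "3 \<Rightarrow> 3" where
  "cyclic_succ3 i = (if i = 1 then 2 else if i = 2 then 3 else 1)"

lemma cyclic_succ3_simps [simp]: "cyclic_succ3 1 = 2" "cyclic_succ3 2 = 3" "cyclic_succ3 3 = 1"
  unfolding cyclic_succ3_def by simp_all

definition adj3 :: "'a::comm_ring_1^3^3 \<Rightarrow> 'a^3^3" where
  "adj3 G = (let s = cyclic_succ3 in
     \<chi> i j. G$(s j)$(s i) * G$(s (s j))$(s (s i)) - G$(s j)$(s (s i)) * G$(s (s j))$(s i))"

lemma adj3_mult_left: "adj3 G ** G = mat (det G)"
  unfolding adj3_def Let_def matrix_matrix_mult_def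
  by (simp add: vec_eq_iff forall_3 sum_3 det_3 mat_def algebra_simps)

lemma matrix_inv_mult:
  fixes G :: "'a::field^'n^'n"
  assumes "det G \<noteq> 0"
  shows "matrix_inv G ** G = mat 1" and "G ** matrix_inv G = mat 1"
proof -
  have "\<exists>G'. G ** G' = mat 1 \<and> G' ** G = mat 1"
    using assms invertible_det_nz unfolding invertible_def by blast
  then have "G ** matrix_inv G = mat 1 \<and> matrix_inv G ** G = mat 1"
    unfolding matrix_inv_def by (rule someI_ex)
  then show "matrix_inv G ** G = mat 1" "G ** matrix_inv G = mat 1"
    by auto
qed

lemma matrix_inv_eq_adj3:
  fixes G :: "real^3^3"
  assumes "det G \<noteq> 0"
  shows "matrix_inv G = (1 / det G) *\<^sub>R adj3 G"
proof -
  have left_inverse: "((1 / det G) *\<^sub>R adj3 G) ** G = mat 1"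
    using assms by (simp add: scalar_matrix_assoc[symmetric] adj3_mult_left mat_def vec_eq_iff)
  have "(1 / det G) *\<^sub>R adj3 G = ((1 / det G) *\<^sub>R adj3 G) ** (G ** matrix_inv G)"
    using matrix_inv_mult(2)[OF assms] by simp
  also have "\<dots> = matrix_inv G"
    using left_inverse by (simp add: matrix_mul_assoc)
  finally show ?thesis
    by simp
qed

lemma transpose_matrix_inv_symmetric:
  fixes G :: "'a::field^'n^'n"
  assumes "det G \<noteq> 0" "transpose G = G"
  shows "transpose (matrix_inv G) = matrix_inv G"
proof -
  have "transpose (matrix_inv G) ** G = transpose (transpose G ** matrix_inv G)"
    by (simp add: matrix_transpose_mul)
  also have "\<dots> = mat 1"
    using assms(2) matrix_inv_mult(2)[OF assms(1)] by (simp add: transpose_mat)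
  finally have left_inverse: "transpose (matrix_inv G) ** G = mat 1" .
  have "transpose (matrix_inv G) = transpose (matrix_inv G) ** (G ** matrix_inv G)"
    using matrix_inv_mult(2)[OF assms(1)] by simp
  with left_inverse show ?thesis
    by (simp add: matrix_mul_assoc)
qed

section \<open>Totally skew tensors and the Levi-Civita symbol\<close>

definition totally_skew :: "('i \<Rightarrow> 'i \<Rightarrow> 'i \<Rightarrow> 'a::ab_group_add) \<Rightarrow> bool" where
  "totally_skew E \<longleftrightarrow> (\<forall>a b c. E b a c = - E a b c \<and> E a c b = - E a b c)"

lemma wedge_eq_zero_imp_proportional:
  fixes u v :: "'i \<Rightarrow> 'a::field"
  assumes "u i \<noteq> 0" and "\<And>a b. u a * v b = u b * v a"
  shows "\<exists>c. \<forall>a. v a = c * u a"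
proof (intro exI allI)
  fix a
  show "v a = v i / u i * u a"
    using assms(2)[of i a] assms(1) by (simp add: field_simps)
qed

lemma skew_quadratic_form_eq_0:
  fixes F :: "'i::finite \<Rightarrow> 'i \<Rightarrow> 'a::field_char_0"
  assumes "\<And>a b. F b a = - F a b"
  shows "(\<Sum>a\<in>UNIV. k a * (\<Sum>b\<in>UNIV. F a b * k b)) = 0"
proof -
  let ?S = "\<Sum>a\<in>UNIV. \<Sum>b\<in>UNIV. k a * k b * F a b"
  have "?S = (\<Sum>b\<in>UNIV. \<Sum>a\<in>UNIV. k a * k b * F a b)"
    by (rule sum.swap)
  also have "\<dots> = (\<Sum>b\<in>UNIV. \<Sum>a\<in>UNIV. - (k b * k a * F b a))"
  proof (intro sum.cong refl)
    show "k a * k b * F a b = - (k b * k a * F b a)" for a b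
      using assms[of a b] by (simp add: algebra_simps)
  qed
  also have "\<dots> = - ?S"
    by (simp add: sum_negf)
  finally have "?S = 0"
    by simp
  then show ?thesis
    by (simp add: sum_distrib_left algebra_simps)
qed

definition levi_civita :: "3 \<Rightarrow> 3 \<Rightarrow> 3 \<Rightarrow> 'a::comm_ring_1" where
  "levi_civita a b c =
     (if (a, b, c) \<in> {(1, 2, 3), (2, 3, 1), (3, 1, 2)} then 1
      else if (a, b, c) \<in> {(2, 1, 3), (3, 2, 1), (1, 3, 2)} then -1 else 0)"

lemma levi_civita_simps [simp]:
  "levi_civita 1 2 3 = 1" "levi_civita 2 3 1 = 1" "levi_civita 3 1 2 = 1"
  "levi_civita 2 1 3 = -1" "levi_civita 3 2 1 = -1" "levi_civita 1 3 2 = -1"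
  "levi_civita a a c = 0" "levi_civita a c c = 0" "levi_civita a c a = 0"
  unfolding levi_civita_def by auto

lemma totally_skew_eq_scaled_levi_civita:
  fixes E :: "3 \<Rightarrow> 3 \<Rightarrow> 3 \<Rightarrow> 'a::field_char_0"
  assumes "totally_skew E"
  shows "E = (\<lambda>a b c. E 1 2 3 * levi_civita a b c)"
proof (intro ext)
  fix a b c
  have swap12: "E b a c = - E a b c" and swap23: "E a c b = - E a b c" for a b c
    using assms unfolding totally_skew_def by blast+
  have "E a a c = 0" "E a c c = 0" "E a c a = 0" for a c
    using swap12[of a a c] swap23[of a c c] swap12[of c a a] swap23[of c a a] by simp_all
  moreover have "E 2 1 3 = - E 1 2 3" "E 1 3 2 = - E 1 2 3" "E 3 1 2 = E 1 2 3"
    "E 2 3 1 = E 1 2 3" "E 3 2 1 = - E 1 2 3"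
    using swap12[of 1 2 3] swap23[of 1 2 3] swap12[of 1 3 2] swap23[of 2 1 3] swap12[of 2 3 1]
    by simp_all
  ultimately show "E a b c = E 1 2 3 * levi_civita a b c"
    using exhaust_3[of a] exhaust_3[of b] exhaust_3[of c] by (elim disjE) simp_all
qed

lemma levi_civita_contract_det:
  fixes M :: "3 \<Rightarrow> 3 \<Rightarrow> 'a::comm_ring_1"
  shows "(\<Sum>b\<in>UNIV. \<Sum>c\<in>UNIV. \<Sum>d\<in>UNIV. M p b * M q c * M r d * levi_civita b c d)
    = det (\<chi> i j. M i j) * levi_civita p q r"
  using exhaust_3[of p] exhaust_3[of q] exhaust_3[of r]
  by (elim disjE) (simp_all add: sum_3 det_3 algebra_simps)

lemma levi_civita_contract:
  "(\<Sum>b\<in>UNIV. levi_civita e f b * levi_civita b c d :: 'a::comm_ring_1)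
    = of_bool (e = c \<and> f = d) - of_bool (e = d \<and> f = c)"
  using exhaust_3[of e] exhaust_3[of f] exhaust_3[of c] exhaust_3[of d]
  by (elim disjE) (simp_all add: sum_3)

lemma totally_skew_contract:
  fixes E :: "3 \<Rightarrow> 3 \<Rightarrow> 3 \<Rightarrow> 'a::field_char_0" and M :: "3 \<Rightarrow> 3 \<Rightarrow> 'a"
  assumes "totally_skew E"
  shows "(\<Sum>d\<in>UNIV. (\<Sum>b'\<in>UNIV. E b c b' * M b' d) * (\<Sum>c''\<in>UNIV. \<Sum>d''\<in>UNIV. M c' c'' * M d' d'' * E d c'' d''))
    = (E 1 2 3)^2 * det (\<chi> i j. M i j) * (of_bool (b = c' \<and> c = d') - of_bool (b = d' \<and> c = c'))"
proof -
  define l where "l = E 1 2 3"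
  have E: "E = (\<lambda>a b c. l * levi_civita a b c)"
    unfolding l_def by (rule totally_skew_eq_scaled_levi_civita[OF assms])
  have swap: "(\<Sum>d\<in>UNIV. (\<Sum>b'\<in>UNIV. X b' * M b' d) * Y d) = (\<Sum>b'\<in>UNIV. X b' * (\<Sum>d\<in>UNIV. M b' d * Y d))"
    for X Y :: "3 \<Rightarrow> 'a"
    by (simp add: sum_distrib_left sum_distrib_right mult.assoc, rule sum.swap)
  have inner: "(\<Sum>d\<in>UNIV. M b' d * (\<Sum>c''\<in>UNIV. \<Sum>d''\<in>UNIV. M c' c'' * M d' d'' * E d c'' d''))
    = l * det (\<chi> i j. M i j) * levi_civita b' c' d'" for b'
  proof -
    have "(\<Sum>d\<in>UNIV. M b' d * (\<Sum>c''\<in>UNIV. \<Sum>d''\<in>UNIV. M c' c'' * M d' d'' * E d c'' d''))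
      = l * (\<Sum>d\<in>UNIV. \<Sum>c''\<in>UNIV. \<Sum>d''\<in>UNIV. M b' d * M c' c'' * M d' d'' * levi_civita d c'' d'')"
      unfolding E by (simp add: sum_distrib_left algebra_simps)
    then show ?thesis
      by (simp add: levi_civita_contract_det)
  qed
  have "(\<Sum>d\<in>UNIV. (\<Sum>b'\<in>UNIV. E b c b' * M b' d) * (\<Sum>c''\<in>UNIV. \<Sum>d''\<in>UNIV. M c' c'' * M d' d'' * E d c'' d''))
    = (\<Sum>b'\<in>UNIV. E b c b' * (l * det (\<chi> i j. M i j) * levi_civita b' c' d'))"
    unfolding swap inner ..
  also have "\<dots> = l^2 * det (\<chi> i j. M i j) * (\<Sum>b'\<in>UNIV. levi_civita b c b' * levi_civita b' c' d')"
    unfolding E by (simp add: sum_distrib_left power2_eq_square algebra_simps)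
  finally show ?thesis
    by (simp add: levi_civita_contract l_def)
qed

lemma of_bool_delta_skew:
  fixes C :: "3 \<Rightarrow> 3 \<Rightarrow> 'a::comm_ring_1"
  shows "(\<Sum>c'\<in>UNIV. \<Sum>d'\<in>UNIV. (of_bool (b = c' \<and> c = d') - of_bool (b = d' \<and> c = c')) * C c' d')
    = C b c - C c b"
  using exhaust_3[of b] exhaust_3[of c] by (elim disjE) (simp_all add: sum_3)

text \<open>Contracting the Hodge dual of a 2-form C with the volume form recovers C, up to the
  normalisation factor e_123^2 det g^-1 of the volume form.\<close>
lemma totally_skew_contract_dual:
  fixes E :: "3 \<Rightarrow> 3 \<Rightarrow> 3 \<Rightarrow> 'a::field_char_0" and M C :: "3 \<Rightarrow> 3 \<Rightarrow> 'a"
  assumes "totally_skew E" and C_skew: "\<And>c d. C d c = - C c d"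
  shows "(\<Sum>d\<in>UNIV. (\<Sum>b'\<in>UNIV. E b c b' * M b' d) *
      ((1/2) * (\<Sum>c'\<in>UNIV. \<Sum>d'\<in>UNIV. (\<Sum>c''\<in>UNIV. \<Sum>d''\<in>UNIV. M c' c'' * M d' d'' * E d c'' d'') * C c' d')))
    = (E 1 2 3)^2 * det (\<chi> i j. M i j) * C b c"
proof -
  have rearrange: "(\<Sum>d\<in>UNIV. X d * (k * (\<Sum>c'\<in>UNIV. \<Sum>d'\<in>UNIV. Y c' d' d * C c' d')))
    = k * (\<Sum>c'\<in>UNIV. \<Sum>d'\<in>UNIV. (\<Sum>d\<in>UNIV. X d * Y c' d' d) * C c' d')"
    for X :: "3 \<Rightarrow> 'a" and Y :: "3 \<Rightarrow> 3 \<Rightarrow> 3 \<Rightarrow> 'a" and k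
    by (simp add: sum_3 algebra_simps)
  have "(\<Sum>d\<in>UNIV. (\<Sum>b'\<in>UNIV. E b c b' * M b' d) *
      ((1/2) * (\<Sum>c'\<in>UNIV. \<Sum>d'\<in>UNIV. (\<Sum>c''\<in>UNIV. \<Sum>d''\<in>UNIV. M c' c'' * M d' d'' * E d c'' d'') * C c' d')))
    = (1/2) * (\<Sum>c'\<in>UNIV. \<Sum>d'\<in>UNIV. (\<Sum>d\<in>UNIV. (\<Sum>b'\<in>UNIV. E b c b' * M b' d) *
          (\<Sum>c''\<in>UNIV. \<Sum>d''\<in>UNIV. M c' c'' * M d' d'' * E d c'' d'')) * C c' d')"
    by (rule rearrange)
  also have "\<dots> = (1/2) * (\<Sum>c'\<in>UNIV. \<Sum>d'\<in>UNIV. (E 1 2 3)^2 * det (\<chi> i j. M i j) *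
        (of_bool (b = c' \<and> c = d') - of_bool (b = d' \<and> c = c')) * C c' d')"
    by (simp only: totally_skew_contract[OF assms(1)])
  also have "\<dots> = (1/2) * ((E 1 2 3)^2 * det (\<chi> i j. M i j) *
      (\<Sum>c'\<in>UNIV. \<Sum>d'\<in>UNIV. (of_bool (b = c' \<and> c = d') - of_bool (b = d' \<and> c = c')) * C c' d'))"
    by (simp only: mult.assoc sum_distrib_left)
  also have "\<dots> = (1/2) * ((E 1 2 3)^2 * det (\<chi> i j. M i j) * (C b c - C c b))"
    by (simp only: of_bool_delta_skew)
  finally show ?thesis
    using C_skew[of b c] by simp
qed

lemma totally_skew_norm:
  fixes E :: "3 \<Rightarrow> 3 \<Rightarrow> 3 \<Rightarrow> 'a::field_char_0" and M :: "3 \<Rightarrow> 3 \<Rightarrow> 'a"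
  assumes "totally_skew E"
  shows "(\<Sum>a\<in>UNIV. \<Sum>b\<in>UNIV. \<Sum>c\<in>UNIV. \<Sum>a'\<in>UNIV. \<Sum>b'\<in>UNIV. \<Sum>c'\<in>UNIV.
            M a a' * M b b' * M c c' * E a b c * E a' b' c') = (E 1 2 3)^2 * det (\<chi> i j. M i j) * 6"
proof -
  define l where "l = E 1 2 3"
  have E: "E = (\<lambda>a b c. l * levi_civita a b c)"
    unfolding l_def by (rule totally_skew_eq_scaled_levi_civita[OF assms])
  have "(\<Sum>a'\<in>UNIV. \<Sum>b'\<in>UNIV. \<Sum>c'\<in>UNIV. M a a' * M b b' * M c c' * E a b c * E a' b' c')
     = l^2 * det (\<chi> i j. M i j) * (levi_civita a b c)^2" for a b c
  proof -
    have "(\<Sum>a'\<in>UNIV. \<Sum>b'\<in>UNIV. \<Sum>c'\<in>UNIV. M a a' * M b b' * M c c' * E a b c * E a' b' c')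
      = l^2 * levi_civita a b c *
        (\<Sum>a'\<in>UNIV. \<Sum>b'\<in>UNIV. \<Sum>c'\<in>UNIV. M a a' * M b b' * M c c' * levi_civita a' b' c')"
      unfolding E by (simp add: sum_distrib_left power2_eq_square algebra_simps)
    then show ?thesis
      by (simp add: levi_civita_contract_det power2_eq_square)
  qed
  then show ?thesis
    by (simp add: sum_3 sum_distrib_left[symmetric] l_def)
qed

text \<open>Pointwise model: G and M stand for g_ab and g^ab, and k_flat is k_a. In null_cotton,
  E is the volume form, A the Cotton tensor and cotton_dual the field equation solved for A.\<close>
locale null_vector =
  fixes G M :: "'i::finite \<Rightarrow> 'i \<Rightarrow> 'a::field_char_0" and k :: "'i \<Rightarrow> 'a"
  assumes inverse: "\<And>a c. (\<Sum>b\<in>UNIV. M a b * G b c) = of_bool (a = c)"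
    and null: "(\<Sum>a\<in>UNIV. \<Sum>b\<in>UNIV. G a b * k a * k b) = 0"
    and nonzero: "\<exists>i. k i \<noteq> 0"
begin

definition k_flat :: "'i \<Rightarrow> 'a" where
  "k_flat a = (\<Sum>b\<in>UNIV. G a b * k b)"

lemma raise_k_flat: "(\<Sum>b\<in>UNIV. M a b * k_flat b) = k a"
proof -
  have "(\<Sum>b\<in>UNIV. M a b * k_flat b) = (\<Sum>c\<in>UNIV. (\<Sum>b\<in>UNIV. M a b * G b c) * k c)"
    unfolding k_flat_def by (simp add: sum_distrib_left sum_distrib_right mult.assoc, rule sum.swap)
  then show ?thesis
    by (simp add: inverse)
qed

lemma k_flat_nonzero: obtains i where "k_flat i \<noteq> 0"
proof -
  obtain j where "k j \<noteq> 0"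
    using nonzero by blast
  moreover have "k j = 0" if "\<forall>i. k_flat i = 0"
    using raise_k_flat[of j] that by simp
  ultimately show ?thesis
    using that by blast
qed

lemma k_k_flat: "(\<Sum>a\<in>UNIV. k a * k_flat a) = 0"
  using null unfolding k_flat_def by (simp add: sum_distrib_left algebra_simps)

end

locale null_cotton = null_vector G M k
  for G M :: "'i::finite \<Rightarrow> 'i \<Rightarrow> 'a::field_char_0" and k +
  fixes E A :: "'i \<Rightarrow> 'i \<Rightarrow> 'i \<Rightarrow> 'a" and \<Phi> :: "'i \<Rightarrow> 'i \<Rightarrow> 'a" and \<kappa> :: 'a
  assumes E_skew: "totally_skew E"
    and \<Phi>_sym: "\<And>a b. \<Phi> a b = \<Phi> b a"
    and cotton_dual: "\<And>a b c. A a b c = \<kappa> * (\<Sum>d\<in>UNIV. (\<Sum>e\<in>UNIV. E b c e * M e d) * \<Phi> a d)"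
begin

lemma contract_k_cotton:
  "(\<Sum>a\<in>UNIV. k a * A a b c) = \<kappa> * (\<Sum>d\<in>UNIV. (\<Sum>e\<in>UNIV. E b c e * M e d) * (\<Sum>a\<in>UNIV. \<Phi> d a * k a))"
proof -
  have swap: "(\<Sum>a\<in>UNIV. k a * (\<kappa> * (\<Sum>d\<in>UNIV. N d * P a d)))
    = \<kappa> * (\<Sum>d\<in>UNIV. N d * (\<Sum>a\<in>UNIV. P a d * k a))" for N :: "'i \<Rightarrow> 'a" and P
    by (simp add: sum_distrib_left mult_ac, rule sum.swap)
  have flip: "(\<Sum>a\<in>UNIV. \<Phi> a d * k a) = (\<Sum>a\<in>UNIV. \<Phi> d a * k a)" for d
    by (simp only: \<Phi>_sym[of _ d])
  show ?thesis
    unfolding cotton_dual swap flip ..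
qed

lemma dual_k_flat: "(\<Sum>d\<in>UNIV. (\<Sum>e\<in>UNIV. E b c e * M e d) * k_flat d) = (\<Sum>e\<in>UNIV. E b c e * k e)"
proof -
  have "(\<Sum>d\<in>UNIV. (\<Sum>e\<in>UNIV. E b c e * M e d) * k_flat d) = (\<Sum>e\<in>UNIV. E b c e * (\<Sum>d\<in>UNIV. M e d * k_flat d))"
    by (simp add: sum_distrib_left sum_distrib_right mult.assoc, rule sum.swap)
  then show ?thesis
    by (simp add: raise_k_flat)
qed

lemma E_contract_k_k_13: "(\<Sum>b\<in>UNIV. k b * (\<Sum>e\<in>UNIV. E b c e * k e)) = 0"
  using E_skew unfolding totally_skew_def by (intro skew_quadratic_form_eq_0) metis

lemma E_contract_k_k_23: "(\<Sum>c\<in>UNIV. k c * (\<Sum>e\<in>UNIV. E b c e * k e)) = 0"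
  using E_skew unfolding totally_skew_def by (intro skew_quadratic_form_eq_0) metis

lemma k_k_cotton_eq: "(\<Sum>a\<in>UNIV. \<Sum>b\<in>UNIV. k a * k b * A a b c) = (\<Sum>b\<in>UNIV. k b * (\<Sum>a\<in>UNIV. k a * A a b c))"
  by (subst sum.swap) (simp add: sum_distrib_left algebra_simps)

lemma cotton_k_k_of_wedge_zero:
  assumes "\<forall>a b. k_flat a * (\<Sum>d\<in>UNIV. \<Phi> b d * k d) = k_flat b * (\<Sum>d\<in>UNIV. \<Phi> a d * k d)"
  shows "(\<Sum>a\<in>UNIV. \<Sum>b\<in>UNIV. k a * k b * A a b c) = 0"
proof -
  obtain i where "k_flat i \<noteq> 0"
    by (rule k_flat_nonzero)
  then obtain \<rho> where \<rho>: "(\<Sum>a\<in>UNIV. \<Phi> d a * k a) = \<rho> * k_flat d" for d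
    using wedge_eq_zero_imp_proportional[of k_flat i "\<lambda>d. \<Sum>a\<in>UNIV. \<Phi> d a * k a"] assms by blast
  have "(\<Sum>a\<in>UNIV. \<Sum>b\<in>UNIV. k a * k b * A a b c) = (\<Sum>b\<in>UNIV. k b * (\<Sum>a\<in>UNIV. k a * A a b c))"
    by (rule k_k_cotton_eq)
  also have "\<dots> = (\<Sum>b\<in>UNIV. k b * (\<kappa> * \<rho> * (\<Sum>d\<in>UNIV. (\<Sum>e\<in>UNIV. E b c e * M e d) * k_flat d)))"
    unfolding contract_k_cotton \<rho> by (simp add: sum_distrib_left algebra_simps)
  also have "\<dots> = \<kappa> * \<rho> * (\<Sum>b\<in>UNIV. k b * (\<Sum>e\<in>UNIV. E b c e * k e))"
    unfolding dual_k_flat by (simp add: sum_distrib_left algebra_simps)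
  finally show ?thesis
    by (simp add: E_contract_k_k_13)
qed

lemma k_cotton_of_phi_k_zero:
  assumes "\<forall>a. (\<Sum>b\<in>UNIV. \<Phi> a b * k b) = 0"
  shows "(\<Sum>a\<in>UNIV. k a * A a b c) = 0"
  using assms by (simp add: contract_k_cotton)

lemma phi_rank_one_of_wedge_zero:
  assumes "\<forall>a b c. k_flat a * \<Phi> b c = k_flat b * \<Phi> a c"
  obtains \<mu> where "\<And>b c. \<Phi> b c = \<mu> * k_flat b * k_flat c"
proof -
  obtain i where i: "k_flat i \<noteq> 0"
    by (rule k_flat_nonzero)
  have "\<exists>w. \<forall>b. \<Phi> b c = w * k_flat b" for c
    using wedge_eq_zero_imp_proportional[of k_flat i "\<lambda>b. \<Phi> b c"] i assms by blast
  then obtain w where w: "\<And>b c. \<Phi> b c = w c * k_flat b"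
    by metis
  have "k_flat b * w c = k_flat c * w b" for b c
    using w[of b c] w[of c b] \<Phi>_sym[of b c] by (simp add: mult.commute)
  then obtain \<mu> where "\<And>c. w c = \<mu> * k_flat c"
    using wedge_eq_zero_imp_proportional[of k_flat i w] i by blast
  then show ?thesis
    using w by (intro that[of \<mu>]) (simp add: mult_ac)
qed

lemma cotton_k_of_wedge_zero:
  assumes "\<forall>a b c. k_flat a * \<Phi> b c = k_flat b * \<Phi> a c"
  shows "(\<Sum>c\<in>UNIV. k c * A a b c) = 0" and "(\<Sum>a\<in>UNIV. k a * A a b c) = 0"
proof -
  obtain \<mu> where \<mu>: "\<And>b c. \<Phi> b c = \<mu> * k_flat b * k_flat c"
    using phi_rank_one_of_wedge_zero[OF assms] by blast
  have "(\<Sum>c\<in>UNIV. k c * A a b c)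
      = \<kappa> * \<mu> * k_flat a * (\<Sum>c\<in>UNIV. k c * (\<Sum>d\<in>UNIV. (\<Sum>e\<in>UNIV. E b c e * M e d) * k_flat d))"
    unfolding cotton_dual \<mu> by (simp add: sum_distrib_left sum_distrib_right algebra_simps)
  then show "(\<Sum>c\<in>UNIV. k c * A a b c) = 0"
    by (simp add: dual_k_flat E_contract_k_k_23)
  have "(\<Sum>a\<in>UNIV. \<Phi> d a * k a) = \<mu> * k_flat d * (\<Sum>a\<in>UNIV. k a * k_flat a)" for d
    unfolding \<mu> by (simp add: sum_distrib_left algebra_simps)
  then show "(\<Sum>a\<in>UNIV. k a * A a b c) = 0"
    by (simp add: contract_k_cotton k_k_flat)
qed

end

section \<open>Symmetry of the Ricci tensor\<close>

text \<open>Here P i c a b stands for the derivative of Gamma^c_ab along i. Of the terms of R_ab, only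
  the derivative of Gamma^c_cb along a is not manifestly symmetric.\<close>
lemma ricci_formula_sym:
  fixes \<Gamma> :: "3 \<Rightarrow> 3 \<Rightarrow> 3 \<Rightarrow> real" and P :: "3 \<Rightarrow> 3 \<Rightarrow> 3 \<Rightarrow> 3 \<Rightarrow> real"
  assumes "\<And>c a b. \<Gamma> c a b = \<Gamma> c b a" "\<And>i c a b. P i c a b = P i c b a"
    and "(\<Sum>c\<in>UNIV. P a c c b) = (\<Sum>c\<in>UNIV. P b c c a)"
  shows "(\<Sum>c\<in>UNIV. P a c c b - P c c a b + (\<Sum>e\<in>UNIV. \<Gamma> c a e * \<Gamma> e c b - \<Gamma> c c e * \<Gamma> e a b))
       = (\<Sum>c\<in>UNIV. P b c c a - P c c b a + (\<Sum>e\<in>UNIV. \<Gamma> c b e * \<Gamma> e c a - \<Gamma> c c e * \<Gamma> e b a))"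
  using assms(3) by (simp add: sum_3 assms(1,2) algebra_simps)

context
  fixes U :: "(real^3) set" and g :: metric
  assumes metric: "riem_or_lor_metric U g"
begin

lemma metric_open: "open U"
  using metric unfolding riem_or_lor_metric_def by blast

lemma metric_transpose: "y \<in> U \<Longrightarrow> transpose (g y) = g y"
  using metric unfolding riem_or_lor_metric_def by blast

lemma metric_sym: "y \<in> U \<Longrightarrow> g y $ a $ b = g y $ b $ a"
  using arg_cong[OF metric_transpose, of y "\<lambda>G. G $ a $ b"] by (simp add: transpose_def)

lemma metric_det_nonzero: "y \<in> U \<Longrightarrow> det (g y) \<noteq> 0"
  using metric unfolding riem_or_lor_metric_def by blast

lemma metric_smooth: "smooth_on U (\<lambda>y. g y $ a $ b)"
  using metric unfolding riem_or_lor_metric_def by blast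

lemma ginv_metric: "y \<in> U \<Longrightarrow> (\<Sum>e\<in>UNIV. ginv g y c e * g y $ e $ d) = (if c = d then 1 else 0)"
  using matrix_inv_mult(1)[OF metric_det_nonzero, of y]
  unfolding ginv_def matrix_matrix_mult_def mat_def by (simp add: vec_eq_iff)

lemma metric_ginv: "y \<in> U \<Longrightarrow> (\<Sum>e\<in>UNIV. g y $ c $ e * ginv g y e d) = (if c = d then 1 else 0)"
  using matrix_inv_mult(2)[OF metric_det_nonzero, of y]
  unfolding ginv_def matrix_matrix_mult_def mat_def by (simp add: vec_eq_iff)

lemma ginv_sym: "y \<in> U \<Longrightarrow> ginv g y a b = ginv g y b a"
  using arg_cong[OF transpose_matrix_inv_symmetric[OF metric_det_nonzero metric_transpose], of y "\<lambda>G. G $ a $ b"]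
  unfolding ginv_def by (simp add: transpose_def)

lemma metric_differentiable: "y \<in> U \<Longrightarrow> (\<lambda>y. g y $ a $ b) differentiable (at y)"
  using metric_smooth[of a b] ipd.simps(1) unfolding smooth_on_def by metis

lemma pd_metric_differentiable: "y \<in> U \<Longrightarrow> pd (\<lambda>y. g y $ a $ b) i differentiable (at y)"
  using metric_smooth[of a b] ipd.simps unfolding smooth_on_def by metis

lemma pd_metric_sym: "y \<in> U \<Longrightarrow> pd (\<lambda>y. g y $ a $ b) i y = pd (\<lambda>y. g y $ b $ a) i y"
  by (rule pd_cong[OF metric_open]) (auto intro: metric_sym)

text \<open>The inverse metric is differentiable because it is the adjugate, a polynomial in the
  components of g, divided by the nonvanishing determinant.\<close>
lemma ginv_differentiable:
  assumes "x \<in> U"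
  shows "(\<lambda>y. ginv g y c d) differentiable (at x)"
proof -
  have "(\<lambda>y. adj3 (g y) $ c $ d / det (g y)) differentiable (at x)"
    unfolding adj3_def Let_def det_3 using metric_det_nonzero[OF assms] unfolding det_3
    by (intro differentiable_divide)
      (auto intro!: differentiable_mult differentiable_diff differentiable_add metric_differentiable assms)
  then obtain D where "((\<lambda>y. adj3 (g y) $ c $ d / det (g y)) has_derivative D) (at x)"
    unfolding differentiable_def by blast
  then have "((\<lambda>y. ginv g y c d) has_derivative D) (at x)"
  proof (rule has_derivative_transform_within_open[OF _ metric_open assms])
    show "adj3 (g y) $ c $ d / det (g y) = ginv g y c d" if "y \<in> U" for y
      using matrix_inv_eq_adj3[OF metric_det_nonzero[OF that]] unfolding ginv_def by simp
  qed
  then show ?thesis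
    unfolding differentiable_def by blast
qed

lemma pd_ginv:
  assumes "x \<in> U"
  shows "pd (\<lambda>y. ginv g y c f) i x
     = - (\<Sum>d\<in>UNIV. \<Sum>e\<in>UNIV. ginv g x c e * pd (\<lambda>y. g y $ e $ d) i x * ginv g x d f)"
proof -
  have product_rule: "(\<Sum>e\<in>UNIV. pd (\<lambda>y. ginv g y c e) i x * g x $ e $ d)
     = - (\<Sum>e\<in>UNIV. ginv g x c e * pd (\<lambda>y. g y $ e $ d) i x)" for d
  proof -
    have "pd (\<lambda>y. \<Sum>e\<in>UNIV. ginv g y c e * g y $ e $ d) i x = pd (\<lambda>y. if c = d then 1 else 0) i x"
      by (rule pd_cong[OF metric_open assms]) (rule ginv_metric)
    moreover have "pd (\<lambda>y. \<Sum>e\<in>UNIV. ginv g y c e * g y $ e $ d) i x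
      = (\<Sum>e\<in>UNIV. ginv g x c e * pd (\<lambda>y. g y $ e $ d) i x + pd (\<lambda>y. ginv g y c e) i x * g x $ e $ d)"
      using assms by (simp add: pd_sum pd_mult differentiable_mult ginv_differentiable metric_differentiable)
    ultimately show ?thesis
      by (simp add: sum.distrib eq_neg_iff_add_eq_0 add.commute)
  qed
  have "pd (\<lambda>y. ginv g y c f) i x = (\<Sum>e\<in>UNIV. if e = f then pd (\<lambda>y. ginv g y c e) i x else 0)"
    by simp
  also have "\<dots> = (\<Sum>e\<in>UNIV. pd (\<lambda>y. ginv g y c e) i x * (\<Sum>d\<in>UNIV. g x $ e $ d * ginv g x d f))"
    by (rule sum.cong[OF refl]) (simp add: metric_ginv[OF assms])
  also have "\<dots> = (\<Sum>d\<in>UNIV. (\<Sum>e\<in>UNIV. pd (\<lambda>y. ginv g y c e) i x * g x $ e $ d) * ginv g x d f)"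
    by (simp add: sum_distrib_left sum_distrib_right mult.assoc, rule sum.swap)
  finally show ?thesis
    by (simp add: product_rule sum_distrib_right sum_negf)
qed

lemma christ_sym: "y \<in> U \<Longrightarrow> christ g c a b y = christ g c b a y"
  unfolding christ_def using pd_metric_sym[of y a b] by (simp add: algebra_simps)

lemma christ_differentiable: "x \<in> U \<Longrightarrow> christ g c a b differentiable (at x)"
  unfolding christ_def[abs_def]
  by (intro differentiable_mult differentiable_sum differentiable_const)
    (auto intro!: differentiable_mult differentiable_add differentiable_diff
      ginv_differentiable pd_metric_differentiable)

lemma christ_trace:
  "y \<in> U \<Longrightarrow> (\<Sum>c\<in>UNIV. christ g c c b y)
     = (1/2) * (\<Sum>c\<in>UNIV. \<Sum>d\<in>UNIV. ginv g y c d * pd (\<lambda>y. g y $ c $ d) b y)"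
  unfolding christ_def
  by (simp add: sum_3 pd_metric_sym[of y _ _ b] ginv_sym[of y] pd_metric_sym[of y] algebra_simps)

lemma pd_christ_trace:
  assumes "x \<in> U"
  shows "(\<Sum>c\<in>UNIV. pd (christ g c c b) i x)
   = (1/2) * (\<Sum>c\<in>UNIV. \<Sum>d\<in>UNIV. ginv g x c d * pd (pd (\<lambda>y. g y $ c $ d) b) i x)
     - (1/2) * (\<Sum>c\<in>UNIV. \<Sum>d\<in>UNIV. \<Sum>d'\<in>UNIV. \<Sum>e\<in>UNIV.
           ginv g x c e * pd (\<lambda>y. g y $ e $ d') i x * ginv g x d' d * pd (\<lambda>y. g y $ c $ d) b x)"
proof -
  have contracted: "(\<Sum>c\<in>UNIV. \<Sum>d\<in>UNIV. pd (\<lambda>y. ginv g y c d) i x * pd (\<lambda>y. g y $ c $ d) b x)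
    = - (\<Sum>c\<in>UNIV. \<Sum>d\<in>UNIV. \<Sum>d'\<in>UNIV. \<Sum>e\<in>UNIV.
           ginv g x c e * pd (\<lambda>y. g y $ e $ d') i x * ginv g x d' d * pd (\<lambda>y. g y $ c $ d) b x)"
    using assms by (simp add: pd_ginv sum_distrib_right sum_negf)
  have "(\<Sum>c\<in>UNIV. pd (christ g c c b) i x) = pd (\<lambda>y. \<Sum>c\<in>UNIV. christ g c c b y) i x"
    using assms by (simp add: pd_sum christ_differentiable)
  also have "\<dots> = pd (\<lambda>y. (1/2) * (\<Sum>c\<in>UNIV. \<Sum>d\<in>UNIV. ginv g y c d * pd (\<lambda>y. g y $ c $ d) b y)) i x"
    by (rule pd_cong[OF metric_open assms]) (rule christ_trace)
  also have "\<dots> = (1/2) * pd (\<lambda>y. \<Sum>c\<in>UNIV. \<Sum>d\<in>UNIV. ginv g y c d * pd (\<lambda>y. g y $ c $ d) b y) i x"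
    using assms by (intro pd_cmult)
      (auto intro!: differentiable_sum differentiable_mult ginv_differentiable pd_metric_differentiable)
  also have "\<dots> = (1/2) * (\<Sum>c\<in>UNIV. \<Sum>d\<in>UNIV. ginv g x c d * pd (pd (\<lambda>y. g y $ c $ d) b) i x
        + pd (\<lambda>y. ginv g y c d) i x * pd (\<lambda>y. g y $ c $ d) b x)"
    using assms by (simp add: pd_sum pd_mult differentiable_sum differentiable_mult
        ginv_differentiable pd_metric_differentiable)
  finally show ?thesis
    by (simp only: sum.distrib contracted) (simp add: algebra_simps)
qed

lemma pd_christ_trace_sym:
  assumes "x \<in> U"
  shows "(\<Sum>c\<in>UNIV. pd (christ g c c b) i x) = (\<Sum>c\<in>UNIV. pd (christ g c c i) b x)"
proof -
  have "pd (pd (\<lambda>y. g y $ c $ d) b) i x = pd (pd (\<lambda>y. g y $ c $ d) i) b x" for c d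
    by (rule smooth_pd_pd_commute[OF metric_open assms metric_smooth])
  moreover have "(\<Sum>c\<in>UNIV. \<Sum>d\<in>UNIV. \<Sum>d'\<in>UNIV. \<Sum>e\<in>UNIV.
           ginv g x c e * pd (\<lambda>y. g y $ e $ d') i x * ginv g x d' d * pd (\<lambda>y. g y $ c $ d) b x)
     = (\<Sum>c\<in>UNIV. \<Sum>d\<in>UNIV. \<Sum>d'\<in>UNIV. \<Sum>e\<in>UNIV.
           ginv g x c e * pd (\<lambda>y. g y $ e $ d') b x * ginv g x d' d * pd (\<lambda>y. g y $ c $ d) i x)"
    using assms by (simp add: sum_3 ginv_sym[of x] pd_metric_sym[of x] algebra_simps)
  ultimately show ?thesis
    using assms by (simp add: pd_christ_trace)
qed

lemma ric_sym:
  assumes "x \<in> U"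
  shows "ric g a b x = ric g b a x"
  unfolding ric_def riem_def
proof (rule ricci_formula_sym)
  show "christ g c a b x = christ g c b a x" for c a b
    using assms by (rule christ_sym)
  show "pd (christ g c a b) i x = pd (christ g c b a) i x" for i c a b
    by (rule pd_cong[OF metric_open assms]) (rule christ_sym)
  show "(\<Sum>c\<in>UNIV. pd (christ g c c b) a x) = (\<Sum>c\<in>UNIV. pd (christ g c c a) b x)"
    using assms by (rule pd_christ_trace_sym)
qed

lemma phi_sym: "x \<in> U \<Longrightarrow> phi g a b x = phi g b a x"
  unfolding phi_def using ric_sym metric_sym by simp

end

section \<open>Topologically massive gravity\<close>

lemma orientation_totally_skew: "orientation U g e \<Longrightarrow> x \<in> U \<Longrightarrow> totally_skew (e x)"
  unfolding orientation_def totally_skew_def by blast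

lemma orientation_normalisation:
  assumes "orientation U g e" "x \<in> U"
  shows "(e x 1 2 3)^2 * det (matrix_inv (g x)) = (-1) ^ neg_eigs (g x)"
proof -
  have "(e x 1 2 3)^2 * det (\<chi> i j. ginv g x i j) * 6
    = (\<Sum>a\<in>UNIV. \<Sum>b\<in>UNIV. \<Sum>c\<in>UNIV. \<Sum>a'\<in>UNIV. \<Sum>b'\<in>UNIV. \<Sum>c'\<in>UNIV.
      ginv g x a a' * ginv g x b b' * ginv g x c c' * e x a b c * e x a' b' c')"
    by (rule totally_skew_norm[OF orientation_totally_skew[OF assms], symmetric])
  also have "\<dots> = (-1) ^ neg_eigs (g x) * 6"
    using assms unfolding orientation_def by blast
  finally show ?thesis
    unfolding ginv_def by simp
qed

text \<open>The normalisation factor (-1)^q of the volume form is its own inverse.\<close>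
lemma tmg_cotton_eq_dual_phi:
  assumes orient: "orientation U g e" and "m \<noteq> 0"
    and tmg: "\<forall>x\<in>U. \<forall>a b. phi g a b x = (1/m) * hodge_cotton g e a b x"
    and "x \<in> U"
  shows "cotton g a b c x
    = (-1) ^ neg_eigs (g x) * m * (\<Sum>d\<in>UNIV. (\<Sum>e'\<in>UNIV. e x b c e' * ginv g x e' d) * phi g a d x)"
proof -
  let ?N = "\<lambda>d. \<Sum>e'\<in>UNIV. e x b c e' * ginv g x e' d" and ?s = "(-1) ^ neg_eigs (g x) :: real"
  have cotton_skew: "cotton g a d c x = - cotton g a c d x" for c d
    by (simp add: cotton_def)
  have "m * (\<Sum>d\<in>UNIV. ?N d * phi g a d x) = (\<Sum>d\<in>UNIV. ?N d * hodge_cotton g e a d x)"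
    using tmg \<open>x \<in> U\<close> \<open>m \<noteq> 0\<close> by (simp add: sum_distrib_left)
  also have "\<dots> = (e x 1 2 3)^2 * det (\<chi> i j. ginv g x i j) * cotton g a b c x"
    unfolding hodge_cotton_def
    by (rule totally_skew_contract_dual[OF orientation_totally_skew[OF orient \<open>x \<in> U\<close>] cotton_skew])
  also have "\<dots> = ?s * cotton g a b c x"
    using orientation_normalisation[OF orient \<open>x \<in> U\<close>] unfolding ginv_def by simp
  finally have "?s * (m * (\<Sum>d\<in>UNIV. ?N d * phi g a d x)) = ?s * ?s * cotton g a b c x"
    by simp
  then show ?thesis
    by (simp add: left_minus_one_mult_self mult.assoc)
qed

lemma tmg_null_cotton:
  assumes metric: "riem_or_lor_metric U g" and orient: "orientation U g e" and "m \<noteq> 0"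
    and tmg: "\<forall>x\<in>U. \<forall>a b. phi g a b x = (1/m) * hodge_cotton g e a b x"
    and nullk: "null_generator U g k" and "x \<in> U"
  shows "null_cotton (gC g x) (\<lambda>a b. of_real (ginv g x a b)) (\<lambda>a. k x $ a)
    (\<lambda>a b c. of_real (e x a b c)) (\<lambda>a b c. of_real (cotton g a b c x)) (\<lambda>a b. of_real (phi g a b x))
    (of_real ((-1) ^ neg_eigs (g x) * m))"
proof unfold_locales
  show "(\<Sum>b\<in>UNIV. complex_of_real (ginv g x a b) * gC g x b c) = of_bool (a = c)" for a c
    using ginv_metric[OF metric \<open>x \<in> U\<close>, of a c] unfolding gC_def
    by (simp flip: of_real_mult of_real_sum)
  show "(\<Sum>a\<in>UNIV. \<Sum>b\<in>UNIV. gC g x a b * k x $ a * k x $ b) = 0"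
    using nullk \<open>x \<in> U\<close> unfolding null_generator_def by blast
  show "\<exists>i. k x $ i \<noteq> 0"
    using nullk \<open>x \<in> U\<close> unfolding null_generator_def by (metis vec_eq_iff zero_index)
  show "totally_skew (\<lambda>a b c. complex_of_real (e x a b c))"
    using orientation_totally_skew[OF orient \<open>x \<in> U\<close>] unfolding totally_skew_def by (metis of_real_minus)
  show "complex_of_real (phi g a b x) = complex_of_real (phi g b a x)" for a b
    by (simp only: phi_sym[OF metric \<open>x \<in> U\<close>, of a b])
  show "complex_of_real (cotton g a b c x) = complex_of_real ((-1) ^ neg_eigs (g x) * m) *
      (\<Sum>d\<in>UNIV. (\<Sum>e'\<in>UNIV. complex_of_real (e x b c e') * complex_of_real (ginv g x e' d))
        * complex_of_real (phi g a d x))" for a b c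
    using tmg_cotton_eq_dual_phi[OF orient \<open>m \<noteq> 0\<close> tmg \<open>x \<in> U\<close>, of a b c] by simp
qed

theorem mainTheorem10:
  fixes U :: "(real^3) set" and g :: metric and e :: "real^3 \<Rightarrow> 3 \<Rightarrow> 3 \<Rightarrow> 3 \<Rightarrow> real"
    and k :: "real^3 \<Rightarrow> complex^3" and m \<Lambda> :: real
  assumes metric: "riem_or_lor_metric U g"
    and orient: "orientation U g e"
    and m_nz: "m \<noteq> 0"
    and tmg: "\<forall>x\<in>U. \<forall>a b. phi g a b x = (1/m) * hodge_cotton g e a b x"
    and scal_const: "\<forall>x\<in>U. scal g x = 6 * \<Lambda>"
    and nullk: "null_generator U g k"
  shows
   "((\<forall>x\<in>U. \<forall>a b. (1/2) * (lower g k a x * (\<Sum>d\<in>UNIV. of_real (phi g b d x) * k x $ d)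
                              - lower g k b x * (\<Sum>d\<in>UNIV. of_real (phi g a d x) * k x $ d)) = 0)
      \<longrightarrow> (\<forall>x\<in>U. \<forall>c. (\<Sum>a\<in>UNIV. \<Sum>b\<in>UNIV. k x $ a * k x $ b *
              of_real (cotton g a b c x + 3 * g x $ b $ c * pd (schS g) a x)) = 0))
  \<and> ((\<forall>x\<in>U. \<forall>a. (\<Sum>b\<in>UNIV. of_real (phi g a b x) * k x $ b) = 0)
      \<longrightarrow> (\<forall>x\<in>U. (\<forall>b c. (\<Sum>a\<in>UNIV. k x $ a *
                 of_real (cotton g a b c x - (g x $ a $ b * pd (schS g) c x - g x $ a $ c * pd (schS g) b x))) = 0)
             \<and> (\<forall>c. (\<Sum>a\<in>UNIV. \<Sum>b\<in>UNIV. k x $ a * k x $ b * of_real (cotton g a b c x)) = 0)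
             \<and> (\<Sum>a\<in>UNIV. k x $ a * of_real (pd (schS g) a x)) = 0))
  \<and> ((\<forall>x\<in>U. \<forall>a b c. (1/2) * (lower g k a x * of_real (phi g b c x)
                              - lower g k b x * of_real (phi g a c x)) = 0)
      \<longrightarrow> (\<forall>x\<in>U. (\<forall>a b. (\<Sum>c\<in>UNIV. k x $ c *
                 of_real (cotton g a b c x - g x $ c $ a * pd (schS g) b x)) = 0)
             \<and> (\<forall>b c. (\<Sum>a\<in>UNIV. k x $ a * of_real (cotton g a b c x)) = 0)
             \<and> (\<forall>a b. (1/2) * (lower g k a x * of_real (pd (schS g) b x)
                              - lower g k b x * of_real (pd (schS g) a x)) = 0)))"
proof -
  have dS: "pd (schS g) a x = 0" if "x \<in> U" for a x
  proof -
    have "pd (schS g) a x = pd (\<lambda>y. \<Lambda> / 2) a x"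
      using scal_const by (intro pd_cong[OF metric_open[OF metric] that]) (simp add: schS_def)
    then show ?thesis
      by simp
  qed
  note point = tmg_null_cotton[OF metric orient m_nz tmg nullk]
  have k_flat: "null_vector.k_flat (gC g x) (\<lambda>a. k x $ a) a = lower g k a x" if "x \<in> U" for x a
    using null_vector.k_flat_def[OF null_cotton.axioms(1)[OF point[OF that]]] by (simp add: lower_def)
  show ?thesis
    using null_cotton.cotton_k_k_of_wedge_zero[OF point] null_cotton.k_cotton_of_phi_k_zero[OF point]
      null_cotton.cotton_k_of_wedge_zero[OF point] null_cotton.k_k_cotton_eq[OF point]
    by (simp add: dS k_flat)
qed

end
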